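(* Let $\mathcal{H}$ be a finite-dimensional Hilbert space, $\mathcal{O}\in\mathcal{L}(\mathcal{H})$ Hermitian, $\rho$ a quantum state on $\mathcal{H}$, $n\geq 1$ and $1\leq k\leq n$. Let \[\mathcal{O}_k=\frac{1}{n!}\sum_{\pi\in\mathfrak{S}_n}U_\pi\,U_{s_k}\,(\mathcal{O}\otimes I^{\otimes n-1})\,U_\pi^\dagger,\qquad T_k=\frac{1}{2\lfloor n/k\rfloor}\sum_{i=0}^{\lfloor n/k\rfloor-1}\left(A_i+A_i^\dagger\right),\] where $A_i=U_{s_{J_i}}\,\big(I^{\otimes ik}\otimes\mathcal{O}\otimes I^{\otimes n-ik-1}\big)$ and $J_i=(ik+1,ik+2,\ldots,ik+k)$. Then $\mathbf{Var}[\mathcal{O}_k]\leq\mathbf{Var}[T_k]$.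
   Context: $\mathfrak{S}_n$ is the symmetric group on $\{1,\ldots,n\}$; for $\pi\in\mathfrak{S}_n$, $U_\pi$ is the unitary on $\mathcal{H}^{\otimes n}$ with $U_\pi\ket{\psi_1}\cdots\ket{\psi_n}=\ket{\psi_{\pi^{-1}(1)}}\cdots\ket{\psi_{\pi^{-1}(n)}}$. $s_k$ is the cyclic shift on the first $k$ elements ($s_k(i)=i+1$ for $i<k$, $s_k(k)=1$, $s_k(i)=i$ for $i>k$). For a sequence $J=(j_1,\ldots,j_l)$ of distinct elements of $\{1,\ldots,n\}$, $s_J\in\mathfrak{S}_n$ maps $j_t\mapsto j_{t+1}$ for $t<l$, $j_l\mapsto j_1$, and fixes all other elements. For a Hermitian $\mathcal{Q}$ on $\mathcal{H}^{\otimes n}$, $\mathbf{Var}[\mathcal{Q}]=\operatorname{tr}(\mathcal{Q}^2\rho^{\otimes n})-\operatorname{tr}(\mathcal{Q}\rho^{\otimes n})^2$, the variance of the outcome of measuring $\rho^{\otimes n}$ with observable $\mathcal{Q}$. *)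

theory Defs
  imports Complex_Main "HOL-Library.FuncSet" "HOL-Combinatorics.Combinatorics"
begin

text \<open>The Hilbert space H is modelled as C^d (basis indices 0..<d).  The n-fold tensor
power H^(tensor n) has orthonormal basis indexed by the tuples x : {0..<n} -> {0..<d}
(extensional functions).  Operators are represented by their matrix entries
A x y = <e_x, A e_y>.  Tensor positions are 0-based (paper position j is position j-1 here).\<close>

type_synonym op = "(nat \<Rightarrow> nat) \<Rightarrow> (nat \<Rightarrow> nat) \<Rightarrow> complex"

definition idx :: "nat \<Rightarrow> nat \<Rightarrow> (nat \<Rightarrow> nat) set" where
  "idx n d = Pi\<^sub>E {..<n} (\<lambda>_. {..<d})"

definition mmul :: "nat \<Rightarrow> nat \<Rightarrow> op \<Rightarrow> op \<Rightarrow> op" where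
  "mmul n d A B = (\<lambda>x y. \<Sum>z\<in>idx n d. A x z * B z y)"

definition adj :: "op \<Rightarrow> op" where
  "adj A = (\<lambda>x y. cnj (A y x))"

definition tr :: "nat \<Rightarrow> nat \<Rightarrow> op \<Rightarrow> complex" where
  "tr n d A = (\<Sum>x\<in>idx n d. A x x)"

text \<open>U_pi e_y = e_(y o pi^-1), i.e. U_pi (psi_1 ... psi_n) = psi_(pi^-1 1) ... psi_(pi^-1 n).\<close>
definition Uperm :: "nat \<Rightarrow> (nat \<Rightarrow> nat) \<Rightarrow> op" where
  "Uperm n \<pi> = (\<lambda>x y. if (\<forall>i<n. x i = y (inv \<pi> i)) then 1 else 0)"

text \<open>I^(tensor p) (tensor) Obs (tensor) I^(tensor n-p-1), Obs a d x d matrix.\<close>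
definition embed :: "nat \<Rightarrow> nat \<Rightarrow> (nat \<Rightarrow> nat \<Rightarrow> complex) \<Rightarrow> op" where
  "embed n p Obs = (\<lambda>x y. Obs (x p) (y p) *
      (\<Prod>i\<in>{..<n} - {p}. if x i = y i then 1 else 0))"

definition tensor_pow :: "nat \<Rightarrow> (nat \<Rightarrow> nat \<Rightarrow> complex) \<Rightarrow> op" where
  "tensor_pow n \<rho> = (\<lambda>x y. \<Prod>i<n. \<rho> (x i) (y i))"

definition hermitian :: "nat \<Rightarrow> (nat \<Rightarrow> nat \<Rightarrow> complex) \<Rightarrow> bool" where
  "hermitian d Obs \<longleftrightarrow> (\<forall>i<d. \<forall>j<d. Obs i j = cnj (Obs j i))"

definition density :: "nat \<Rightarrow> (nat \<Rightarrow> nat \<Rightarrow> complex) \<Rightarrow> bool" where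
  "density d \<rho> \<longleftrightarrow> hermitian d \<rho>
     \<and> (\<forall>v :: nat \<Rightarrow> complex. 0 \<le> Re (\<Sum>i<d. \<Sum>j<d. cnj (v i) * \<rho> i j * v j))
     \<and> (\<Sum>i<d. \<rho> i i) = 1"

text \<open>Var[Q] = tr(Q^2 rho^(tensor n)) - tr(Q rho^(tensor n))^2 (real for Hermitian Q).\<close>
definition Var :: "nat \<Rightarrow> nat \<Rightarrow> (nat \<Rightarrow> nat \<Rightarrow> complex) \<Rightarrow> op \<Rightarrow> real" where
  "Var n d \<rho> Q = Re (tr n d (mmul n d (mmul n d Q Q) (tensor_pow n \<rho>)))
      - (Re (tr n d (mmul n d Q (tensor_pow n \<rho>))))\<^sup>2"

text \<open>s_k = cyclic shift of the first k positions; s_J = cycle_of_list J.\<close>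
definition O_k :: "nat \<Rightarrow> nat \<Rightarrow> nat \<Rightarrow> (nat \<Rightarrow> nat \<Rightarrow> complex) \<Rightarrow> op" where
  "O_k n d k Obs = (\<lambda>x y. (1 / of_nat (fact n)) *
     (\<Sum>\<pi>\<in>{\<pi>. \<pi> permutes {..<n}}.
        mmul n d (mmul n d (Uperm n \<pi>)
                     (mmul n d (Uperm n (cycle_of_list [0..<k])) (embed n 0 Obs)))
                 (adj (Uperm n \<pi>)) x y))"

definition A_i :: "nat \<Rightarrow> nat \<Rightarrow> nat \<Rightarrow> (nat \<Rightarrow> nat \<Rightarrow> complex) \<Rightarrow> nat \<Rightarrow> op" where
  "A_i n d k Obs i = mmul n d (Uperm n (cycle_of_list [i*k..<i*k+k])) (embed n (i*k) Obs)"

definition T_k :: "nat \<Rightarrow> nat \<Rightarrow> nat \<Rightarrow> (nat \<Rightarrow> nat \<Rightarrow> complex) \<Rightarrow> op" where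
  "T_k n d k Obs = (\<lambda>x y. (1 / (2 * of_nat (n div k))) *
     (\<Sum>i<n div k. A_i n d k Obs i x y + adj (A_i n d k Obs i) x y))"

end

theory Submission
  imports Defs
begin

(* Since rho^(tensor n) is invariant under permutations of the factors, every conjugate
   U_pi Q U_pi^* has the same mean and second moment as Q; and Q |-> tr(Q^2 rho^(tensor n)) is
   convex on Hermitian Q because rho^(tensor n) is positive semidefinite (rho is a Gram matrix,
   by repeated Schur complements, hence so is its tensor power).  So averaging over S_n cannot
   increase the variance, and it remains to see that the average of the conjugates of T_k is O_k:
   A_i is conjugate to A_0 = U_(s_k) (O tensor I) by the permutation exchanging the blocks J_0 and
   J_i, and A_i^* is conjugate to A_0 too, via j |-> -j mod k on J_0, which inverts the cycle s_k. *)

section \<open>Index tuples and permutation matrices\<close>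

lemma finite_idx [simp]: "finite (idx n d)"
  unfolding idx_def by (simp add: finite_PiE)

lemma comp_permutes_in_idx:
  assumes "x \<in> idx n d" "\<pi> permutes {..<n}"
  shows "x \<circ> \<pi> \<in> idx n d"
  using assms permutes_in_image[OF assms(2)] permutes_not_in[OF assms(2)]
  unfolding idx_def by (auto simp: PiE_def extensional_def Pi_def)

lemma bij_betw_comp_permutes_idx:
  assumes "\<pi> permutes {..<n}"
  shows "bij_betw (\<lambda>x. x \<circ> \<pi>) (idx n d) (idx n d)"
proof (rule bij_betw_byWitness[where f' = "\<lambda>x. x \<circ> inv \<pi>"])
  have inv_perm: "inv \<pi> permutes {..<n}"
    using assms by (rule permutes_inv)
  show "\<forall>x\<in>idx n d. x \<circ> \<pi> \<circ> inv \<pi> = x" "\<forall>x\<in>idx n d. x \<circ> inv \<pi> \<circ> \<pi> = x"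
    using permutes_inv_o[OF assms] by (simp_all add: comp_assoc)
  show "(\<lambda>x. x \<circ> \<pi>) ` idx n d \<subseteq> idx n d" "(\<lambda>x. x \<circ> inv \<pi>) ` idx n d \<subseteq> idx n d"
    using comp_permutes_in_idx assms inv_perm by auto
qed

lemma sum_idx_comp_permutes:
  assumes "\<pi> permutes {..<n}"
  shows "(\<Sum>x\<in>idx n d. G (x \<circ> \<pi>)) = (\<Sum>x\<in>idx n d. G x)"
  using sum.reindex_bij_betw[OF bij_betw_comp_permutes_idx[OF assms]] .

lemma Uperm_eq_1_iff:
  assumes "\<pi> permutes {..<n}" "x \<in> idx n d" "z \<in> idx n d"
  shows "(\<forall>i<n. x i = z (inv \<pi> i)) \<longleftrightarrow> z = x \<circ> \<pi>"
proof
  assume eq: "\<forall>i<n. x i = z (inv \<pi> i)"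
  show "z = x \<circ> \<pi>"
  proof
    fix j
    show "z j = (x \<circ> \<pi>) j"
    proof (cases "j < n")
      case True
      then show ?thesis
        using eq permutes_in_image[OF assms(1)] permutes_inverses(2)[OF assms(1)] by force
    next
      case False
      then show ?thesis
        using assms permutes_not_in[OF assms(1)] unfolding idx_def
        by (auto simp: PiE_def extensional_def)
    qed
  qed
next
  assume "z = x \<circ> \<pi>"
  then show "\<forall>i<n. x i = z (inv \<pi> i)"
    using permutes_inverses(1)[OF assms(1)] by simp
qed

lemma mmul_Uperm_left:
  assumes "\<pi> permutes {..<n}" "x \<in> idx n d"
  shows "mmul n d (Uperm n \<pi>) A x y = A (x \<circ> \<pi>) y"
proof -
  have "mmul n d (Uperm n \<pi>) A x y = (\<Sum>z\<in>idx n d. if z = x \<circ> \<pi> then A z y else 0)"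
    unfolding mmul_def Uperm_def by (rule sum.cong) (auto simp: Uperm_eq_1_iff[OF assms])
  then show ?thesis
    using comp_permutes_in_idx[OF assms(2,1)] by simp
qed

lemma mmul_adj_Uperm_right:
  assumes "\<pi> permutes {..<n}" "y \<in> idx n d"
  shows "mmul n d A (adj (Uperm n \<pi>)) x y = A x (y \<circ> \<pi>)"
proof -
  have "mmul n d A (adj (Uperm n \<pi>)) x y = (\<Sum>z\<in>idx n d. if z = y \<circ> \<pi> then A x z else 0)"
    unfolding mmul_def Uperm_def adj_def by (rule sum.cong) (auto simp: Uperm_eq_1_iff[OF assms])
  then show ?thesis
    using comp_permutes_in_idx[OF assms(2,1)] by simp
qed

lemma embed_comp_permutes:
  assumes "\<tau> permutes {..<n}" "p < n"
  shows "embed n p Obs (u \<circ> \<tau>) (v \<circ> \<tau>) = embed n (\<tau> p) Obs u v"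
proof -
  have "bij_betw \<tau> ({..<n} - {p}) ({..<n} - {\<tau> p})"
    using permutes_imp_bij[OF assms(1)] assms(2) permutes_in_image[OF assms(1)]
    by (intro bij_betw_DiffI) auto
  from prod.reindex_bij_betw[OF this, of "\<lambda>i. if u i = v i then 1 else 0 :: complex"]
  show ?thesis
    unfolding embed_def by simp
qed

lemma cnj_embed:
  assumes "hermitian d Obs" "u \<in> idx n d" "v \<in> idx n d" "p < n"
  shows "cnj (embed n p Obs u v) = embed n p Obs v u"
proof -
  have "u p < d" "v p < d"
    using assms(2-4) unfolding idx_def by (auto dest: PiE_mem)
  then have "cnj (Obs (u p) (v p)) = Obs (v p) (u p)"
    using assms(1) unfolding hermitian_def by (metis complex_cnj_cnj)
  moreover have "(\<Prod>i\<in>{..<n} - {p}. cnj (if u i = v i then 1 else 0))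
      = (\<Prod>i\<in>{..<n} - {p}. if v i = u i then 1 else (0::complex))"
    by (rule prod.cong) auto
  ultimately show ?thesis
    unfolding embed_def complex_cnj_mult cnj_prod by simp
qed

section \<open>Symmetrisation\<close>

definition conj_perm :: "(nat \<Rightarrow> nat) \<Rightarrow> op \<Rightarrow> op" where
  "conj_perm \<pi> A = (\<lambda>x y. A (x \<circ> \<pi>) (y \<circ> \<pi>))"

lemma mmul_Uperm_adj_Uperm:
  assumes "\<pi> permutes {..<n}" "x \<in> idx n d" "y \<in> idx n d"
  shows "mmul n d (mmul n d (Uperm n \<pi>) A) (adj (Uperm n \<pi>)) x y = conj_perm \<pi> A x y"
  using assms by (simp add: mmul_adj_Uperm_right mmul_Uperm_left conj_perm_def)

definition symmetrise :: "nat \<Rightarrow> op \<Rightarrow> op" where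
  "symmetrise n A = (\<lambda>x y. (1 / of_nat (fact n)) *
     (\<Sum>\<pi>\<in>{\<pi>. \<pi> permutes {..<n}}. conj_perm \<pi> A x y))"

lemma symmetrise_add:
  "symmetrise n (\<lambda>x y. A x y + B x y) x y = symmetrise n A x y + symmetrise n B x y"
  by (simp add: symmetrise_def conj_perm_def sum.distrib distrib_left)

lemma symmetrise_scaled_sum:
  "symmetrise n (\<lambda>x y. c * (\<Sum>i\<in>I. F i x y)) x y = c * (\<Sum>i\<in>I. symmetrise n (F i) x y)"
proof -
  have "(\<Sum>\<pi>\<in>{\<pi>. \<pi> permutes {..<n}}. \<Sum>i\<in>I. F i (x \<circ> \<pi>) (y \<circ> \<pi>))
      = (\<Sum>i\<in>I. \<Sum>\<pi>\<in>{\<pi>. \<pi> permutes {..<n}}. F i (x \<circ> \<pi>) (y \<circ> \<pi>))"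
    by (rule sum.swap)
  then show ?thesis
    unfolding symmetrise_def conj_perm_def
    by (simp only: sum_distrib_left[symmetric]) (simp add: sum_distrib_left mult.left_commute)
qed

lemma symmetrise_cong:
  assumes "\<And>u v. u \<in> idx n d \<Longrightarrow> v \<in> idx n d \<Longrightarrow> A u v = B u v" "x \<in> idx n d" "y \<in> idx n d"
  shows "symmetrise n A x y = symmetrise n B x y"
  unfolding symmetrise_def conj_perm_def using assms comp_permutes_in_idx by simp

lemma symmetrise_conj_perm:
  assumes "g permutes {..<n}"
  shows "symmetrise n (conj_perm g A) = symmetrise n A"
proof -
  have "(\<Sum>\<pi>\<in>{\<pi>. \<pi> permutes {..<n}}. A (x \<circ> (\<pi> \<circ> g)) (y \<circ> (\<pi> \<circ> g)))
      = (\<Sum>\<pi>\<in>{\<pi>. \<pi> permutes {..<n}}. A (x \<circ> \<pi>) (y \<circ> \<pi>))" for x y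
    using sum_permutations_compose_right[OF assms, of "\<lambda>\<pi>. A (x \<circ> \<pi>) (y \<circ> \<pi>)"] by simp
  then show ?thesis
    by (simp add: symmetrise_def conj_perm_def fun_eq_iff comp_assoc)
qed

section \<open>Block permutations\<close>

definition block_cycle :: "nat \<Rightarrow> nat \<Rightarrow> nat \<Rightarrow> nat" where
  "block_cycle a k j = (if a \<le> j \<and> j + 1 < a + k then j + 1 else if j + 1 = a + k then a else j)"

definition block_swap :: "nat \<Rightarrow> nat \<Rightarrow> nat \<Rightarrow> nat" where
  "block_swap m k j = (if j < k then m + j else if m \<le> j \<and> j < m + k then j - m else j)"

definition block_neg :: "nat \<Rightarrow> nat \<Rightarrow> nat" where
  "block_neg k j = (if 0 < j \<and> j < k then k - j else j)"

lemma cycle_of_list_upt: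
  assumes "0 < k"
  shows "cycle_of_list [a..<a + k] = block_cycle a k"
  using assms
proof (induction k arbitrary: a rule: nat_induct_non_zero)
  case 1
  show ?case by (auto simp: block_cycle_def)
next
  case (Suc k)
  have "[a..<a + Suc k] = a # [Suc a..<Suc a + k]"
    by (simp add: upt_conv_Cons)
  moreover have "[Suc a..<Suc a + k] = Suc a # [Suc (Suc a)..<Suc a + k]"
    using Suc.hyps by (simp add: upt_conv_Cons)
  ultimately have "cycle_of_list [a..<a + Suc k] = transpose a (Suc a) \<circ> cycle_of_list [Suc a..<Suc a + k]"
    by (simp only: cycle_of_list.simps)
  also have "\<dots> = transpose a (Suc a) \<circ> block_cycle (Suc a) k"
    by (simp only: Suc.IH)
  also have "\<dots> = block_cycle a (Suc k)"
    using Suc.hyps by (auto simp: fun_eq_iff block_cycle_def transpose_def)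
  finally show ?case .
qed

lemma involution_permutes:
  assumes "\<And>j. f (f j) = j" "\<And>j. j \<notin> S \<Longrightarrow> f j = j" "\<And>j. j \<in> S \<Longrightarrow> f j \<in> S"
  shows "f permutes S"
  by (rule bij_imp_permutes, rule bij_betw_byWitness[where f' = f]) (use assms in auto)

lemma block_cycle_permutes:
  assumes "0 < k" "a + k \<le> n"
  shows "block_cycle a k permutes {..<n}"
proof -
  have "block_cycle a k permutes {a..<a + k}"
    using cycle_permutes[of "[a..<a + k]"] cycle_of_list_upt[OF assms(1)] by simp
  then show ?thesis
    by (rule permutes_subset) (use assms(2) in auto)
qed

lemma block_swap_permutes:
  assumes "i * k + k \<le> n"
  shows "block_swap (i * k) k permutes {..<n}"
proof -
  define m where "m = i * k"
  have "m = 0 \<or> k \<le> m"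
    unfolding m_def by (cases i) auto
  with assms[folded m_def] show ?thesis
    unfolding m_def[symmetric] by (intro involution_permutes) (auto simp: block_swap_def)
qed

lemma block_neg_permutes:
  assumes "k \<le> n"
  shows "block_neg k permutes {..<n}"
  by (rule involution_permutes) (use assms in \<open>auto simp: block_neg_def\<close>)

lemma block_cycle_comp_block_swap:
  assumes "0 < k"
  shows "block_cycle (i * k) k \<circ> block_swap (i * k) k = block_swap (i * k) k \<circ> block_cycle 0 k"
proof -
  define m where "m = i * k"
  have "m = 0 \<or> k \<le> m"
    unfolding m_def by (cases i) auto
  with assms show ?thesis
    unfolding m_def[symmetric] by (auto simp: fun_eq_iff block_cycle_def block_swap_def)
qed

lemma block_cycle_block_neg_block_cycle:
  assumes "0 < k"
  shows "block_cycle 0 k \<circ> block_neg k \<circ> block_cycle 0 k = block_neg k"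
  using assms by (auto simp: fun_eq_iff block_cycle_def block_neg_def)

section \<open>The operators \<open>O_k\<close> and \<open>T_k\<close>\<close>

lemma mult_add_le_of_less_div:
  fixes i n k :: nat
  assumes "i < n div k"
  shows "i * k + k \<le> n"
proof -
  have "0 < k"
    using assms by (cases "k = 0") auto
  then show ?thesis
    using assms less_eq_div_iff_mult_less_eq[of k "Suc i" n] by simp
qed

lemma A_i_apply:
  assumes "0 < k" "i * k + k \<le> n" "u \<in> idx n d"
  shows "A_i n d k Obs i u v = embed n (i * k) Obs (u \<circ> block_cycle (i * k) k) v"
  unfolding A_i_def cycle_of_list_upt[OF assms(1)]
  using mmul_Uperm_left[OF block_cycle_permutes[OF assms(1,2)] assms(3)] .

lemma A_i_conj_block_swap:
  assumes "0 < k" "i < n div k" "u \<in> idx n d" "v \<in> idx n d"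
  shows "A_i n d k Obs i u v = conj_perm (block_swap (i * k) k) (A_i n d k Obs 0) u v"
proof -
  let ?\<sigma> = "block_swap (i * k) k"
  have block: "i * k + k \<le> n"
    using mult_add_le_of_less_div[OF assms(2)] .
  have swap: "?\<sigma> permutes {..<n}"
    using block_swap_permutes[OF block] .
  have "conj_perm ?\<sigma> (A_i n d k Obs 0) u v
      = embed n 0 Obs (u \<circ> ?\<sigma> \<circ> block_cycle 0 k) (v \<circ> ?\<sigma>)"
    unfolding conj_perm_def
    using A_i_apply[of k 0 n "u \<circ> ?\<sigma>" d Obs] assms(1) block comp_permutes_in_idx[OF assms(3) swap]
    by simp
  also have "\<dots> = embed n 0 Obs (u \<circ> block_cycle (i * k) k \<circ> ?\<sigma>) (v \<circ> ?\<sigma>)"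
    using block_cycle_comp_block_swap[OF assms(1)] by (simp add: comp_assoc)
  also have "\<dots> = embed n (i * k) Obs (u \<circ> block_cycle (i * k) k) v"
    using embed_comp_permutes[OF swap, of 0] assms(1) block by (simp add: block_swap_def)
  also have "\<dots> = A_i n d k Obs i u v"
    using A_i_apply[OF assms(1) block assms(3)] by simp
  finally show ?thesis ..
qed

lemma adj_A_i_conj_perm:
  assumes "hermitian d Obs" "0 < k" "i < n div k" "u \<in> idx n d" "v \<in> idx n d"
  shows "adj (A_i n d k Obs i) u v
    = conj_perm (block_swap (i * k) k \<circ> block_cycle 0 k \<circ> block_neg k) (A_i n d k Obs 0) u v"
proof -
  let ?\<sigma> = "block_swap (i * k) k" and ?\<gamma> = "block_cycle (i * k) k"
  let ?\<tau> = "?\<sigma> \<circ> block_neg k" and ?g = "?\<sigma> \<circ> block_cycle 0 k \<circ> block_neg k"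
  have block: "i * k + k \<le> n"
    using mult_add_le_of_less_div[OF assms(3)] .
  have "k \<le> n"
    using block by simp
  have perms: "?\<sigma> permutes {..<n}" "?\<gamma> permutes {..<n}" "?\<tau> permutes {..<n}" "?g permutes {..<n}"
    using block_swap_permutes[OF block] block_cycle_permutes[OF assms(2) block]
      block_cycle_permutes[of k 0 n] block_neg_permutes[OF \<open>k \<le> n\<close>] assms(2) \<open>k \<le> n\<close>
    by (auto intro: permutes_compose)
  have "conj_perm ?g (A_i n d k Obs 0) u v = embed n 0 Obs (u \<circ> ?g \<circ> block_cycle 0 k) (v \<circ> ?g)"
    unfolding conj_perm_def
    using A_i_apply[of k 0 n "u \<circ> ?g" d Obs] assms(2) \<open>k \<le> n\<close> comp_permutes_in_idx[OF assms(4) perms(4)]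
    by simp
  also have "\<dots> = embed n 0 Obs (u \<circ> ?\<sigma> \<circ> (block_cycle 0 k \<circ> block_neg k \<circ> block_cycle 0 k))
          (v \<circ> (?\<sigma> \<circ> block_cycle 0 k) \<circ> block_neg k)"
    by (simp add: comp_assoc)
  also have "\<dots> = embed n 0 Obs (u \<circ> ?\<tau>) (v \<circ> ?\<gamma> \<circ> ?\<tau>)"
    by (simp add: block_cycle_block_neg_block_cycle[OF assms(2)]
        flip: block_cycle_comp_block_swap[OF assms(2)]) (simp add: comp_assoc)
  also have "\<dots> = embed n (i * k) Obs u (v \<circ> ?\<gamma>)"
    using embed_comp_permutes[OF perms(3), of 0] assms(2) block
    by (simp add: block_swap_def block_neg_def)
  also have "\<dots> = cnj (embed n (i * k) Obs (v \<circ> ?\<gamma>) u)"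
    using cnj_embed[OF assms(1) comp_permutes_in_idx[OF assms(5) perms(2)] assms(4)] assms(2) block
    by simp
  also have "\<dots> = adj (A_i n d k Obs i) u v"
    using A_i_apply[OF assms(2) block assms(5)] by (simp add: adj_def)
  finally show ?thesis ..
qed

lemma O_k_eq_symmetrise:
  assumes "x \<in> idx n d" "y \<in> idx n d"
  shows "O_k n d k Obs x y = symmetrise n (A_i n d k Obs 0) x y"
  unfolding O_k_def symmetrise_def
  using mmul_Uperm_adj_Uperm[OF _ assms, of _ "A_i n d k Obs 0"] by (simp add: A_i_def)

lemma symmetrise_T_k:
  assumes "hermitian d Obs" "0 < k" "k \<le> n" "x \<in> idx n d" "y \<in> idx n d"
  shows "symmetrise n (T_k n d k Obs) x y = symmetrise n (A_i n d k Obs 0) x y"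
proof -
  let ?S = "symmetrise n (A_i n d k Obs 0) x y"
  let ?m = "n div k"
  have each: "symmetrise n (A_i n d k Obs i) x y + symmetrise n (adj (A_i n d k Obs i)) x y = 2 * ?S"
    if "i < ?m" for i
  proof -
    let ?\<sigma> = "block_swap (i * k) k"
    have "?\<sigma> permutes {..<n}" "?\<sigma> \<circ> block_cycle 0 k \<circ> block_neg k permutes {..<n}"
      using block_swap_permutes[OF mult_add_le_of_less_div[OF that]] block_cycle_permutes[of k 0 n]
        block_neg_permutes[of k n] assms(2,3)
      by (auto intro: permutes_compose)
    moreover have "symmetrise n (A_i n d k Obs i) x y
        = symmetrise n (conj_perm ?\<sigma> (A_i n d k Obs 0)) x y"
      by (rule symmetrise_cong[OF _ assms(4,5)]) (rule A_i_conj_block_swap[OF assms(2) that])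
    moreover have "symmetrise n (adj (A_i n d k Obs i)) x y
        = symmetrise n (conj_perm (?\<sigma> \<circ> block_cycle 0 k \<circ> block_neg k) (A_i n d k Obs 0)) x y"
      by (rule symmetrise_cong[OF _ assms(4,5)]) (rule adj_A_i_conj_perm[OF assms(1,2) that])
    ultimately show ?thesis
      by (simp add: symmetrise_conj_perm)
  qed
  have "symmetrise n (T_k n d k Obs) x y = (1 / (2 * of_nat ?m)) *
      (\<Sum>i<?m. symmetrise n (A_i n d k Obs i) x y + symmetrise n (adj (A_i n d k Obs i)) x y)"
    unfolding T_k_def symmetrise_scaled_sum symmetrise_add ..
  also have "\<dots> = (1 / (2 * of_nat ?m)) * (\<Sum>i<?m. 2 * ?S)"
    using each by simp
  also have "\<dots> = ?S"
    using assms(2,3) by (simp add: div_greater_zero_iff)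
  finally show ?thesis .
qed

section \<open>Positive semidefinite kernels\<close>

definition quad_form :: "'a set \<Rightarrow> ('a \<Rightarrow> 'a \<Rightarrow> complex) \<Rightarrow> ('a \<Rightarrow> complex) \<Rightarrow> complex" where
  "quad_form I M v = (\<Sum>i\<in>I. \<Sum>j\<in>I. cnj (v i) * M i j * v j)"

definition psd_on :: "'a set \<Rightarrow> ('a \<Rightarrow> 'a \<Rightarrow> complex) \<Rightarrow> bool" where
  "psd_on I M \<longleftrightarrow> (\<forall>v. 0 \<le> Re (quad_form I M v))"

definition hermitian_on :: "'a set \<Rightarrow> ('a \<Rightarrow> 'a \<Rightarrow> complex) \<Rightarrow> bool" where
  "hermitian_on I M \<longleftrightarrow> (\<forall>i\<in>I. \<forall>j\<in>I. M i j = cnj (M j i))"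

lemma hermitian_on_lessThan_iff: "hermitian_on {..<d} M \<longleftrightarrow> hermitian d M"
  by (auto simp: hermitian_on_def hermitian_def)

lemma density_imp_psd_on: "density d \<rho> \<Longrightarrow> psd_on {..<d} \<rho>"
  by (simp add: density_def psd_on_def quad_form_def)

lemma psd_on_subset:
  assumes "psd_on I M" "J \<subseteq> I" "finite I"
  shows "psd_on J M"
  unfolding psd_on_def
proof
  fix v
  let ?v = "\<lambda>i. if i \<in> J then v i else 0 :: complex"
  have "quad_form I M ?v
      = (\<Sum>i\<in>J. \<Sum>j\<in>I. cnj (?v i) * M i j * ?v j)"
    unfolding quad_form_def using assms(2,3) by (intro sum.mono_neutral_right) auto
  also have "\<dots> = quad_form J M v"
    unfolding quad_form_def using assms(2,3) by (intro sum.cong refl sum.mono_neutral_cong_right) auto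
  finally have "quad_form I M ?v = quad_form J M v" .
  then show "0 \<le> Re (quad_form J M v)"
    using assms(1) unfolding psd_on_def by metis
qed

lemma hermitian_on_subset: "hermitian_on I M \<Longrightarrow> J \<subseteq> I \<Longrightarrow> hermitian_on J M"
  by (auto simp: hermitian_on_def)

lemma psd_on_gram:
  assumes "\<And>i j. i \<in> I \<Longrightarrow> j \<in> I \<Longrightarrow> M i j = (\<Sum>m\<in>K. w m i * cnj (w m j))"
  shows "psd_on I M"
  unfolding psd_on_def
proof
  fix v
  let ?s = "\<lambda>m. \<Sum>i\<in>I. cnj (v i) * w m i"
  have "quad_form I M v = (\<Sum>i\<in>I. \<Sum>j\<in>I. \<Sum>m\<in>K. cnj (v i) * w m i * cnj (cnj (v j) * w m j))"
    unfolding quad_form_def using assms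
    by (intro sum.cong refl) (simp add: sum_distrib_left sum_distrib_right mult_ac)
  also have "\<dots> = (\<Sum>m\<in>K. ?s m * cnj (?s m))"
    by (simp add: sum.swap[of _ K] sum_product cnj_sum)
  also have "\<dots> = (\<Sum>m\<in>K. complex_of_real ((cmod (?s m))\<^sup>2))"
    by (simp only: complex_norm_square)
  finally show "0 \<le> Re (quad_form I M v)"
    by (simp add: sum_nonneg)
qed

lemma quad_form_add_delta:
  assumes "finite I" "p \<in> I"
  shows "quad_form I M (\<lambda>i. v i + (if i = p then c else 0))
    = quad_form I M v + cnj c * (\<Sum>j\<in>I. M p j * v j) + c * (\<Sum>i\<in>I. cnj (v i) * M i p)
      + cnj c * M p p * c"
proof -
  have "cnj (v i + (if i = p then c else 0)) * M i j * (v j + (if j = p then c else 0))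
     = cnj (v i) * M i j * v j + (if j = p then cnj (v i) * M i j * c else 0)
       + (if i = p then cnj c * M i j * v j else 0)
       + (if i = p then if j = p then cnj c * M i j * c else 0 else 0)" for i j
    by (auto simp: algebra_simps)
  moreover have "(\<Sum>j\<in>J. if P then f j else 0) = (if P then sum f J else 0)"
    for J P and f :: "'a \<Rightarrow> complex"
    by simp
  ultimately show ?thesis
    unfolding quad_form_def using assms
    by (simp add: sum.distrib sum_distrib_left sum_distrib_right algebra_simps
        if_distrib[of "\<lambda>x. x * _"] del: sum.If_cases)
qed

lemma quad_form_delta:
  assumes "finite I" "p \<in> I"
  shows "quad_form I M (\<lambda>i. if i = p then 1 else 0) = M p p"
  using quad_form_add_delta[OF assms, of M "\<lambda>_. 0" 1] by (simp add: quad_form_def)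

lemma psd_on_diag_nonneg:
  assumes "psd_on I M" "finite I" "p \<in> I"
  shows "0 \<le> Re (M p p)"
  using assms(1) quad_form_delta[OF assms(2,3), of M] unfolding psd_on_def by metis

lemma hermitian_on_diag_real:
  assumes "hermitian_on I M" "p \<in> I"
  shows "complex_of_real (Re (M p p)) = M p p"
  using assms unfolding hermitian_on_def by (metis Reals_cnj_iff of_real_Re)

lemma psd_on_zero_row:
  assumes "finite I" "hermitian_on I M" "psd_on I M" "p \<in> I" "j \<in> I" "M p p = 0"
  shows "M p j = 0"
proof (rule ccontr)
  assume nonzero: "M p j \<noteq> 0"
  define a where "a = M p j"
  define \<delta> where "\<delta> = (\<lambda>i. if i = j then 1 else 0 :: complex)"
  have "M j p = cnj a"
    using assms(2,4,5) unfolding a_def hermitian_on_def by blast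
  moreover have "(\<Sum>l\<in>I. M p l * \<delta> l) = (\<Sum>l\<in>I. if l = j then M p l else 0)"
    "(\<Sum>i\<in>I. cnj (\<delta> i) * M i p) = (\<Sum>i\<in>I. if i = j then M i p else 0)"
    unfolding \<delta>_def by (auto intro: sum.cong)
  ultimately have "(\<Sum>l\<in>I. M p l * \<delta> l) = a" "(\<Sum>i\<in>I. cnj (\<delta> i) * M i p) = cnj a"
    using assms(1,5) by (simp_all add: a_def)
  moreover have "quad_form I M \<delta> = M j j"
    unfolding \<delta>_def by (rule quad_form_delta[OF assms(1,5)])
  ultimately have quad: "Re (quad_form I M (\<lambda>i. \<delta> i + (if i = p then - (of_real t * a) else 0)))
      = Re (M j j) - 2 * t * (cmod a)\<^sup>2" for t
    unfolding quad_form_add_delta[OF assms(1,4)] using assms(6)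
    using cmod_power2[of a, unfolded power2_eq_square]
    by (simp add: power2_eq_square algebra_simps)
  define t where "t = (\<bar>Re (M j j)\<bar> + 1) / (2 * (cmod a)\<^sup>2)"
  have "0 < (cmod a)\<^sup>2"
    using nonzero unfolding a_def by simp
  then have "Re (M j j) - 2 * t * (cmod a)\<^sup>2 < 0"
    unfolding t_def by simp
  with quad assms(3) show False
    unfolding psd_on_def by (metis not_le)
qed

(* For M p p = 0 the division yields 0, so schur_compl p M = M and the elimination step
   needs no case split. *)
definition schur_compl :: "'a \<Rightarrow> ('a \<Rightarrow> 'a \<Rightarrow> complex) \<Rightarrow> 'a \<Rightarrow> 'a \<Rightarrow> complex" where
  "schur_compl p M i j = M i j - M i p * M p j / M p p"

lemma schur_compl_diag: "schur_compl p M p p = 0"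
  by (cases "M p p = 0") (simp_all add: schur_compl_def)

lemma hermitian_on_schur_compl:
  assumes "hermitian_on I M" "p \<in> I"
  shows "hermitian_on I (schur_compl p M)"
  unfolding hermitian_on_def
proof (intro ballI)
  fix i j assume "i \<in> I" "j \<in> I"
  then have "cnj (M j i) = M i j" "cnj (M p i) = M i p" "cnj (M j p) = M p j" "cnj (M p p) = M p p"
    using assms unfolding hermitian_on_def by (metis complex_cnj_cnj)+
  then show "schur_compl p M i j = cnj (schur_compl p M j i)"
    unfolding schur_compl_def by (simp add: mult.commute)
qed

lemma quad_form_schur_compl:
  "quad_form I (schur_compl p M) v
    = quad_form I M v - (\<Sum>i\<in>I. cnj (v i) * M i p) * (\<Sum>j\<in>I. M p j * v j) / M p p"
  unfolding quad_form_def schur_compl_def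
  by (simp add: right_diff_distrib left_diff_distrib sum_subtractf sum_product sum_divide_distrib
      mult.assoc mult.left_commute)

lemma psd_on_schur_compl:
  assumes "finite I" "hermitian_on I M" "psd_on I M" "p \<in> I"
  shows "psd_on I (schur_compl p M)"
  unfolding psd_on_def
proof
  fix v
  define a where "a = M p p"
  define s where "s = (\<Sum>j\<in>I. M p j * v j)"
  have "cnj a = a"
    using assms(2,4) unfolding a_def hermitian_on_def by (metis complex_cnj_cnj)
  have "cnj (M p i) = M i p" if "i \<in> I" for i
    using assms(2,4) that unfolding hermitian_on_def by (metis complex_cnj_cnj)
  then have s_cnj: "(\<Sum>i\<in>I. cnj (v i) * M i p) = cnj s"
    unfolding s_def cnj_sum by (intro sum.cong refl) simp
  have "quad_form I M (\<lambda>i. v i + (if i = p then - s / a else 0)) = quad_form I M v - cnj s * s / a"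
    unfolding quad_form_add_delta[OF assms(1,4)] s_cnj s_def[symmetric] a_def[symmetric]
    using \<open>cnj a = a\<close> by (cases "a = 0") (simp_all add: field_simps)
  then show "0 \<le> Re (quad_form I (schur_compl p M) v)"
    using assms(3) unfolding quad_form_schur_compl s_cnj s_def[symmetric] a_def[symmetric] psd_on_def
    by (metis mult.commute)
qed

lemma schur_compl_add_outer:
  assumes "finite I" "hermitian_on I M" "psd_on I M" "p \<in> I" "i \<in> I" "j \<in> I"
  defines "col \<equiv> \<lambda>i. M i p / complex_of_real (sqrt (Re (M p p)))"
  shows "M i j = schur_compl p M i j + col i * cnj (col j)"
proof -
  let ?r = "complex_of_real (sqrt (Re (M p p)))"
  have "?r * ?r = M p p"
    using psd_on_diag_nonneg[OF assms(3,1,4)] hermitian_on_diag_real[OF assms(2,4)]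
    by (simp flip: of_real_mult)
  moreover have "cnj (M j p) = M p j"
    using assms(2,4,6) unfolding hermitian_on_def by (metis complex_cnj_cnj)
  ultimately have "col i * cnj (col j) = M i p * M p j / M p p"
    unfolding col_def by simp
  then show ?thesis
    unfolding schur_compl_def by simp
qed

theorem psd_on_gram_decomposition:
  assumes "finite I" "hermitian_on I M" "psd_on I M"
  shows "\<exists>w. \<forall>i\<in>I. \<forall>j\<in>I. M i j = (\<Sum>m\<in>I. w m i * cnj (w m j))"
  using assms
proof (induction I arbitrary: M rule: finite_induct)
  case empty
  then show ?case by simp
next
  case (insert p I)
  let ?S = "schur_compl p M"
  define col where "col i = M i p / complex_of_real (sqrt (Re (M p p)))" for i
  have fin: "finite (insert p I)"
    using insert.hyps(1) by simp
  have herm: "hermitian_on (insert p I) ?S" and psd: "psd_on (insert p I) ?S"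
    using hermitian_on_schur_compl[OF insert.prems(1)] psd_on_schur_compl[OF fin insert.prems] by auto
  have zero: "?S p j = 0" "?S j p = 0" if "j \<in> insert p I" for j
  proof -
    show "?S p j = 0"
      using psd_on_zero_row[OF fin herm psd _ that schur_compl_diag] by simp
    then show "?S j p = 0"
      using herm that unfolding hermitian_on_def by (metis complex_cnj_zero insertI1)
  qed
  obtain w where w: "\<forall>i\<in>I. \<forall>j\<in>I. ?S i j = (\<Sum>m\<in>I. w m i * cnj (w m j))"
    using insert.IH[OF hermitian_on_subset[OF herm] psd_on_subset[OF psd _ fin]] by auto
  define w' where "w' m i = (if m = p then col i else if i = p then 0 else w m i)" for m i
  have "?S i j = (\<Sum>m\<in>I. w' m i * cnj (w' m j))" if "i \<in> insert p I" "j \<in> insert p I" for i j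
  proof (cases "i = p \<or> j = p")
    case True
    then show ?thesis
      using zero that insert.hyps(2) by (auto simp: w'_def intro!: sum.neutral)
  next
    case False
    then show ?thesis
      using w that insert.hyps(2) by (auto simp: w'_def intro!: sum.cong)
  qed
  moreover have "M i j = ?S i j + col i * cnj (col j)" if "i \<in> insert p I" "j \<in> insert p I" for i j
    using schur_compl_add_outer[OF fin insert.prems _ that] unfolding col_def by simp
  moreover have "w' p = col"
    by (simp add: w'_def fun_eq_iff)
  ultimately have "M i j = (\<Sum>m\<in>insert p I. w' m i * cnj (w' m j))"
    if "i \<in> insert p I" "j \<in> insert p I" for i j
    using that by (simp add: sum.insert[OF insert.hyps])
  then show ?case
    by blast
qed

lemma tensor_pow_comp_permutes:
  assumes "\<pi> permutes {..<n}"
  shows "tensor_pow n \<rho> (x \<circ> \<pi>) (y \<circ> \<pi>) = tensor_pow n \<rho> x y"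
  unfolding tensor_pow_def using prod.permute[OF assms, of "\<lambda>i. \<rho> (x i) (y i)"] by (simp add: comp_def)

lemma psd_on_tensor_pow:
  assumes "hermitian d \<rho>" "psd_on {..<d} \<rho>"
  shows "psd_on (idx n d) (tensor_pow n \<rho>)"
proof -
  obtain w where w: "\<forall>a\<in>{..<d}. \<forall>b\<in>{..<d}. \<rho> a b = (\<Sum>m\<in>{..<d}. w m a * cnj (w m b))"
    using psd_on_gram_decomposition[of "{..<d}" \<rho>] assms by (auto simp: hermitian_on_lessThan_iff)
  have "tensor_pow n \<rho> x y = (\<Sum>J\<in>idx n d. (\<Prod>i<n. w (J i) (x i)) * cnj (\<Prod>i<n. w (J i) (y i)))"
    if "x \<in> idx n d" "y \<in> idx n d" for x y
  proof -
    have "tensor_pow n \<rho> x y = (\<Prod>i<n. \<Sum>m<d. w m (x i) * cnj (w m (y i)))"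
      unfolding tensor_pow_def using that w unfolding idx_def by (intro prod.cong refl) (auto dest: PiE_mem)
    also have "\<dots> = (\<Sum>J\<in>idx n d. \<Prod>i<n. w (J i) (x i) * cnj (w (J i) (y i)))"
      unfolding idx_def by (rule prod_sum_PiE) auto
    finally show ?thesis
      by (simp add: prod.distrib cnj_prod)
  qed
  then show ?thesis
    by (rule psd_on_gram)
qed

section \<open>Expectation values and variance\<close>

definition expval :: "nat \<Rightarrow> nat \<Rightarrow> op \<Rightarrow> op \<Rightarrow> complex" where
  "expval n d R Q = (\<Sum>x\<in>idx n d. \<Sum>y\<in>idx n d. Q x y * R y x)"

definition expval_prod :: "nat \<Rightarrow> nat \<Rightarrow> op \<Rightarrow> op \<Rightarrow> op \<Rightarrow> complex" where
  "expval_prod n d R P Q = (\<Sum>x\<in>idx n d. \<Sum>y\<in>idx n d. \<Sum>z\<in>idx n d. P x z * Q z y * R y x)"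

lemma Var_eq_expval:
  "Var n d \<rho> Q = Re (expval_prod n d (tensor_pow n \<rho>) Q Q) - (Re (expval n d (tensor_pow n \<rho>) Q))\<^sup>2"
  unfolding Var_def tr_def mmul_def expval_def expval_prod_def by (simp add: sum_distrib_right)

lemma Var_cong:
  assumes "\<And>x y. x \<in> idx n d \<Longrightarrow> y \<in> idx n d \<Longrightarrow> Q x y = Q' x y"
  shows "Var n d \<rho> Q = Var n d \<rho> Q'"
  unfolding Var_eq_expval expval_def expval_prod_def using assms by (simp cong: sum.cong)

lemma expval_prod_sum_left:
  "expval_prod n d R (\<lambda>x y. \<Sum>p\<in>P. Y p x y) Q = (\<Sum>p\<in>P. expval_prod n d R (Y p) Q)"
  unfolding expval_prod_def by (simp only: sum_distrib_right sum.swap[where B = P])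

lemma expval_prod_sum_right:
  "expval_prod n d R P (\<lambda>x y. \<Sum>p\<in>I. Y p x y) = (\<Sum>p\<in>I. expval_prod n d R P (Y p))"
  unfolding expval_prod_def by (simp only: sum_distrib_left sum_distrib_right sum.swap[where B = I])

lemma expval_prod_scale_left: "expval_prod n d R (\<lambda>x y. c * P x y) Q = c * expval_prod n d R P Q"
  unfolding expval_prod_def by (simp add: sum_distrib_left mult.assoc)

lemma expval_prod_scale_right: "expval_prod n d R P (\<lambda>x y. c * Q x y) = c * expval_prod n d R P Q"
  unfolding expval_prod_def by (simp add: sum_distrib_left mult.assoc mult.left_commute)

lemma expval_prod_diff:
  "expval_prod n d R (\<lambda>x y. P x y - P' x y) (\<lambda>x y. P x y - P' x y)
    = expval_prod n d R P P - expval_prod n d R P P' - expval_prod n d R P' P + expval_prod n d R P' P'"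
  unfolding expval_prod_def by (simp add: algebra_simps sum_subtractf sum.distrib)

lemma expval_scaled_sum:
  "expval n d R (\<lambda>x y. c * (\<Sum>p\<in>P. Y p x y)) = c * (\<Sum>p\<in>P. expval n d R (Y p))"
  unfolding expval_def
  by (simp only: sum_distrib_right sum_distrib_left sum.swap[where B = P] mult.assoc)

lemma expval_prod_self_nonneg:
  assumes "psd_on (idx n d) R" "hermitian_on (idx n d) D"
  shows "0 \<le> Re (expval_prod n d R D D)"
proof -
  let ?N = "idx n d"
  have "expval_prod n d R D D = (\<Sum>x\<in>?N. \<Sum>z\<in>?N. \<Sum>y\<in>?N. D x z * D z y * R y x)"
    unfolding expval_prod_def by (rule sum.cong[OF refl], rule sum.swap)
  also have "\<dots> = (\<Sum>z\<in>?N. \<Sum>x\<in>?N. \<Sum>y\<in>?N. D x z * D z y * R y x)"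
    by (rule sum.swap)
  also have "\<dots> = (\<Sum>z\<in>?N. \<Sum>y\<in>?N. \<Sum>x\<in>?N. D x z * D z y * R y x)"
    by (rule sum.cong[OF refl], rule sum.swap)
  also have "\<dots> = (\<Sum>z\<in>?N. quad_form ?N R (\<lambda>a. D a z))"
  proof (intro sum.cong refl)
    fix z assume "z \<in> ?N"
    then have "cnj (D y z) = D z y" if "y \<in> ?N" for y
      using assms(2) that unfolding hermitian_on_def by (metis complex_cnj_cnj)
    then show "(\<Sum>y\<in>?N. \<Sum>x\<in>?N. D x z * D z y * R y x) = quad_form ?N R (\<lambda>a. D a z)"
      unfolding quad_form_def by (intro sum.cong refl) (simp add: mult_ac)
  qed
  finally show ?thesis
    using assms(1) unfolding psd_on_def by (simp add: sum_nonneg)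
qed

lemma expval_prod_conj_perm:
  assumes "\<pi> permutes {..<n}"
    and "\<And>x y. x \<in> idx n d \<Longrightarrow> y \<in> idx n d \<Longrightarrow> R (x \<circ> \<pi>) (y \<circ> \<pi>) = R x y"
  shows "expval_prod n d R (conj_perm \<pi> P) (conj_perm \<pi> Q) = expval_prod n d R P Q"
proof -
  let ?N = "idx n d"
  define G where "G a b c = P a c * Q c b * R b a" for a b c
  have "expval_prod n d R (conj_perm \<pi> P) (conj_perm \<pi> Q)
     = (\<Sum>x\<in>?N. \<Sum>y\<in>?N. \<Sum>z\<in>?N. G (x \<circ> \<pi>) (y \<circ> \<pi>) (z \<circ> \<pi>))"
    unfolding expval_prod_def conj_perm_def G_def by (intro sum.cong refl) (simp add: assms(2))
  also have "\<dots> = (\<Sum>x\<in>?N. \<Sum>y\<in>?N. \<Sum>z\<in>?N. G x y z)"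
    by (simp only: sum_idx_comp_permutes[OF assms(1), where G = "\<lambda>c. G _ _ c"]
        sum_idx_comp_permutes[OF assms(1), where G = "\<lambda>b. \<Sum>z\<in>?N. G _ b z"]
        sum_idx_comp_permutes[OF assms(1), where G = "\<lambda>a. \<Sum>y\<in>?N. \<Sum>z\<in>?N. G a y z"])
  finally show ?thesis
    unfolding expval_prod_def G_def .
qed

lemma expval_conj_perm:
  assumes "\<pi> permutes {..<n}"
    and "\<And>x y. x \<in> idx n d \<Longrightarrow> y \<in> idx n d \<Longrightarrow> R (x \<circ> \<pi>) (y \<circ> \<pi>) = R x y"
  shows "expval n d R (conj_perm \<pi> Q) = expval n d R Q"
proof -
  let ?N = "idx n d"
  define G where "G a b = Q a b * R b a" for a b
  have "expval n d R (conj_perm \<pi> Q) = (\<Sum>x\<in>?N. \<Sum>y\<in>?N. G (x \<circ> \<pi>) (y \<circ> \<pi>))"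
    unfolding expval_def conj_perm_def G_def by (intro sum.cong refl) (simp add: assms(2))
  also have "\<dots> = (\<Sum>x\<in>?N. \<Sum>y\<in>?N. G x y)"
    by (simp only: sum_idx_comp_permutes[OF assms(1), where G = "\<lambda>b. G _ b"]
        sum_idx_comp_permutes[OF assms(1), where G = "\<lambda>a. \<Sum>y\<in>?N. G a y"])
  finally show ?thesis
    unfolding expval_def G_def .
qed

lemma expval_prod_average_le:
  assumes "psd_on (idx n d) R" "finite P" "P \<noteq> {}"
    and "\<And>p. p \<in> P \<Longrightarrow> hermitian_on (idx n d) (Y p)"
  defines "M \<equiv> \<lambda>x y. (1 / of_nat (card P)) * (\<Sum>p\<in>P. Y p x y)"
  shows "card P * Re (expval_prod n d R M M) \<le> (\<Sum>p\<in>P. Re (expval_prod n d R (Y p) (Y p)))"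
proof -
  let ?c = "of_nat (card P) :: complex"
  have "?c \<noteq> 0"
    using assms(2,3) by simp
  then have sum_Y: "(\<lambda>x y. \<Sum>p\<in>P. Y p x y) = (\<lambda>x y. ?c * M x y)"
    by (simp add: M_def)
  have herm_M: "hermitian_on (idx n d) M"
    unfolding hermitian_on_def
  proof (intro ballI)
    fix x y assume "x \<in> idx n d" "y \<in> idx n d"
    then have "cnj (Y p y x) = Y p x y" if "p \<in> P" for p
      using assms(4)[OF that] unfolding hermitian_on_def by (metis complex_cnj_cnj)
    then show "M x y = cnj (M y x)"
      unfolding M_def by (simp add: cnj_sum)
  qed
  have "0 \<le> (\<Sum>p\<in>P. Re (expval_prod n d R (\<lambda>x y. Y p x y - M x y) (\<lambda>x y. Y p x y - M x y)))"
  proof (intro sum_nonneg expval_prod_self_nonneg[OF assms(1)])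
    fix p assume "p \<in> P"
    then show "hermitian_on (idx n d) (\<lambda>x y. Y p x y - M x y)"
      using assms(4) herm_M unfolding hermitian_on_def by (metis complex_cnj_diff)
  qed
  also have "\<dots> = Re (\<Sum>p\<in>P. expval_prod n d R (Y p) (Y p)) - card P * Re (expval_prod n d R M M)"
    unfolding expval_prod_diff sum.distrib sum_subtractf Re_sum[symmetric]
      expval_prod_sum_left[symmetric] expval_prod_sum_right[symmetric] sum_Y
    by (simp add: expval_prod_scale_left expval_prod_scale_right)
  finally show ?thesis
    by (simp add: Re_sum)
qed

lemma Var_symmetrise_le:
  assumes "hermitian d \<rho>" "psd_on {..<d} \<rho>" "hermitian_on (idx n d) T"
  shows "Var n d \<rho> (symmetrise n T) \<le> Var n d \<rho> T"
proof -
  let ?R = "tensor_pow n \<rho>" and ?P = "{\<pi>. \<pi> permutes {..<n}}" and ?S = "symmetrise n T"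
  have card: "card ?P = fact n"
    by (simp add: card_permutations)
  have P: "finite ?P" "?P \<noteq> {}"
    using finite_permutations[of "{..<n}"] permutes_id[of "{..<n}"] by blast+
  have herm: "hermitian_on (idx n d) (conj_perm \<pi> T)" if "\<pi> \<in> ?P" for \<pi>
    unfolding hermitian_on_def conj_perm_def
    using assms(3) that comp_permutes_in_idx unfolding hermitian_on_def by blast
  have invariant: "expval_prod n d ?R (conj_perm \<pi> T) (conj_perm \<pi> T) = expval_prod n d ?R T T"
    "expval n d ?R (conj_perm \<pi> T) = expval n d ?R T" if "\<pi> \<in> ?P" for \<pi>
    using that by (auto intro: expval_prod_conj_perm expval_conj_perm tensor_pow_comp_permutes)
  have S: "?S = (\<lambda>x y. (1 / of_nat (card ?P)) * (\<Sum>\<pi>\<in>?P. conj_perm \<pi> T x y))"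
    unfolding symmetrise_def card ..
  have "fact n * Re (expval_prod n d ?R ?S ?S)
      \<le> (\<Sum>\<pi>\<in>?P. Re (expval_prod n d ?R (conj_perm \<pi> T) (conj_perm \<pi> T)))"
    using expval_prod_average_le[OF psd_on_tensor_pow[OF assms(1,2)] P herm] unfolding S card by simp
  also have "\<dots> = fact n * Re (expval_prod n d ?R T T)"
    using card invariant(1) by simp
  finally have "Re (expval_prod n d ?R ?S ?S) \<le> Re (expval_prod n d ?R T T)"
    by simp
  moreover have "expval n d ?R ?S = expval n d ?R T"
    unfolding S expval_scaled_sum using card invariant(2) by simp
  ultimately show ?thesis
    unfolding Var_eq_expval by simp
qed

theorem lemma2p18:
  fixes d n k :: nat and Obs \<rho> :: "nat \<Rightarrow> nat \<Rightarrow> complex"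
  assumes "d \<ge> 1"
    and "hermitian d Obs"
    and "density d \<rho>"
    and "n \<ge> 1" and "1 \<le> k" and "k \<le> n"
  shows "Var n d \<rho> (O_k n d k Obs) \<le> Var n d \<rho> (T_k n d k Obs)"
proof -
  have "0 < k"
    using assms(5) by simp
  have herm_T: "hermitian_on (idx n d) (T_k n d k Obs)"
    unfolding hermitian_on_def T_k_def adj_def by (simp add: cnj_sum add.commute)
  have "Var n d \<rho> (O_k n d k Obs) = Var n d \<rho> (symmetrise n (T_k n d k Obs))"
    using O_k_eq_symmetrise symmetrise_T_k[OF assms(2) \<open>0 < k\<close> assms(6)] by (intro Var_cong) simp
  also have "\<dots> \<le> Var n d \<rho> (T_k n d k Obs)"
    using Var_symmetrise_le[OF _ density_imp_psd_on[OF assms(3)] herm_T] assms(3)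
    by (simp add: density_def)
  finally show ?thesis .
qed

end
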